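(* Let $(\Omega,\mathcal F,P)$ be a probability space with a filtration $\mathcal G_1\subset\mathcal G_2\subset\cdots$ of sub-$\sigma$-algebras, and let $\eta_j$, $j\ge1$, be $d$-dimensional random vectors with $\eta_j$ being $\mathcal G_j$-measurable. Suppose that for some integer $M\ge1$, $$A_{2M}=\sup_{i\ge1}\sum_{j\ge i}\|E(\eta_j\,|\,\mathcal G_i)\|_{2M}<\infty,$$ where $\|\eta\|_p=(E|\eta|^p)^{1/p}$ and $|\cdot|$ is the Euclidean norm. Then for every integer $n\ge1$, $$E\Big|\sum_{j=1}^n\eta_j\Big|^{2M}\le 3(2M)!\,d^MA_{2M}^{2M}n^M.$$ *)

theory Defs
  imports "HOL-Probability.Probability"
begin

definition Lnorm :: "'a measure \<Rightarrow> real \<Rightarrow> ('a \<Rightarrow> 'b::real_normed_vector) \<Rightarrow> ennreal" where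
  "Lnorm M p f =
     (let I = (\<integral>\<^sup>+ x. ennreal (norm (f x) powr p) \<partial>M)
      in if I = \<infinity> then \<infinity> else ennreal (enn2real I powr (1 / p)))"

definition vcond_exp :: "'a measure \<Rightarrow> 'a measure \<Rightarrow> ('a \<Rightarrow> real ^ 'd) \<Rightarrow> ('a \<Rightarrow> real ^ 'd)" where
  "vcond_exp M F f = (\<lambda>x. \<chi> k. real_cond_exp M F (\<lambda>y. f y $ k) x)"

definition A_const :: "'a measure \<Rightarrow> (nat \<Rightarrow> 'a measure) \<Rightarrow> (nat \<Rightarrow> 'a \<Rightarrow> real ^ 'd) \<Rightarrow> nat \<Rightarrow> ennreal" where
  "A_const M G \<eta> m =
     (SUP i\<in>{1..}. \<Sum>k. Lnorm M (real (2 * m)) (vcond_exp M (G i) (\<eta> (i + k))))"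

end

theory Submission
  imports Defs
begin

text \<open>Work componentwise, writing S_n = X_1 + ... + X_n for a real adapted sequence.
  Telescoping S_n^2m and expanding each increment to first order around S_{j-1} gives
  E S_n^2m = sum_j E(D_j V_j) + E R_j, where D_j = 2m (S_j^{2m-1} - S_{j-1}^{2m-1}) is
  G_j-measurable, V_j = sum_{i>j} E(X_i | G_j) (summation by parts of the first-order terms,
  then the tower property) and R_j is the second-order remainder. Hoelder's inequality bounds
  each summand by m(2m-1) A^2 max(s_j, s_{j-1})^{2m-2}, where s_j = ||S_j||_2m, and an
  induction on n turns this recursive inequality into s_n^2 <= 3mnA^2. The components are
  recombined with the power-mean inequality |v|^2m <= d^{m-1} sum_c v_c^2m, and
  (3m)^m <= 3 (2m)!.\<close>

section \<open>Moments of natural order\<close>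

text \<open>\<open>Lp_norm\<close> is the real-valued counterpart of \<open>Lnorm\<close> for natural exponents; being a
  Bochner integral it is \<open>0\<close> rather than \<open>\<infinity>\<close> when \<open>|f|\<^sup>p\<close> is not integrable.\<close>

definition in_Lp :: "'a measure \<Rightarrow> nat \<Rightarrow> ('a \<Rightarrow> real) \<Rightarrow> bool" where
  "in_Lp M p f \<longleftrightarrow> f \<in> borel_measurable M \<and> integrable M (\<lambda>x. \<bar>f x\<bar> ^ p)"

definition Lp_norm :: "'a measure \<Rightarrow> nat \<Rightarrow> ('a \<Rightarrow> real) \<Rightarrow> real" where
  "Lp_norm M p f = (\<integral>x. \<bar>f x\<bar> ^ p \<partial>M) powr (1 / real p)"

lemma power_powr_inverse: "0 \<le> (z::real) \<Longrightarrow> 0 < p \<Longrightarrow> (z ^ p) powr (1 / real p) = z"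
  by (cases "z = 0") (simp_all add: powr_realpow[symmetric] powr_powr)

lemma powr_inverse_power: "0 \<le> (z::real) \<Longrightarrow> 0 < p \<Longrightarrow> (z powr (1 / real p)) ^ p = z"
  by (cases "z = 0") (simp_all add: powr_realpow[symmetric] powr_powr)

lemma prod_le_mean_power:
  fixes y :: "nat \<Rightarrow> real"
  assumes "0 < p" "\<And>k. k < p \<Longrightarrow> 0 \<le> y k"
  shows "(\<Prod>k<p. y k) \<le> (\<Sum>k<p. y k ^ p) / real p"
proof -
  have "(\<Prod>k<p. y k ^ p) powr (1 / card {..<p}) \<le> (\<Sum>k\<in>{..<p}. y k ^ p / card {..<p})"
    by (rule arith_geom_mean) (use assms in auto)
  moreover have "(\<Prod>k<p. y k ^ p) = (\<Prod>k<p. y k) ^ p" by (simp add: prod_power_distrib)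
  moreover have "(\<Prod>k<p. y k) \<ge> 0" using assms by (auto intro: prod_nonneg)
  ultimately show ?thesis using assms(1) by (simp add: power_powr_inverse sum_divide_distrib)
qed

lemma Lp_norm_nonneg: "Lp_norm M p f \<ge> 0"
  unfolding Lp_norm_def by simp

lemma Lp_norm_power: "0 < p \<Longrightarrow> Lp_norm M p f ^ p = (\<integral>x. \<bar>f x\<bar> ^ p \<partial>M)"
  unfolding Lp_norm_def by (rule powr_inverse_power) auto

lemma Lp_norm_abs: "Lp_norm M p (\<lambda>x. \<bar>f x\<bar>) = Lp_norm M p f"
  unfolding Lp_norm_def by simp

lemma Lp_norm_cong_AE:
  assumes "AE x in M. f x = g x"
    and [measurable]: "f \<in> borel_measurable M" "g \<in> borel_measurable M"
  shows "Lp_norm M p f = Lp_norm M p g"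
proof -
  have "(\<integral>x. \<bar>f x\<bar> ^ p \<partial>M) = (\<integral>x. \<bar>g x\<bar> ^ p \<partial>M)"
    by (rule integral_cong_AE) (use assms in auto)
  then show ?thesis unfolding Lp_norm_def by simp
qed

lemma in_Lp_abs: "in_Lp M p f \<Longrightarrow> in_Lp M p (\<lambda>x. \<bar>f x\<bar>)"
  unfolding in_Lp_def by auto

lemma in_Lp_zero: "0 < p \<Longrightarrow> in_Lp M p (\<lambda>x. 0)"
  unfolding in_Lp_def by (simp add: zero_power)

lemma abs_add_power_le: "\<bar>(a::real) + b\<bar> ^ p \<le> 2 ^ p * (\<bar>a\<bar> ^ p + \<bar>b\<bar> ^ p)"
proof -
  have "\<bar>a + b\<bar> ^ p \<le> (2 * max \<bar>a\<bar> \<bar>b\<bar>) ^ p" by (rule power_mono) auto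
  also have "\<dots> = 2 ^ p * max \<bar>a\<bar> \<bar>b\<bar> ^ p" by (simp add: power_mult_distrib)
  also have "max \<bar>a\<bar> \<bar>b\<bar> ^ p \<le> \<bar>a\<bar> ^ p + \<bar>b\<bar> ^ p" by (simp add: max_def)
  finally show ?thesis by simp
qed

lemma in_Lp_add:
  assumes "in_Lp M p f" "in_Lp M p g"
  shows "in_Lp M p (\<lambda>x. f x + g x)"
proof -
  have [measurable]: "f \<in> borel_measurable M" "g \<in> borel_measurable M"
    using assms unfolding in_Lp_def by auto
  have "integrable M (\<lambda>x. \<bar>f x + g x\<bar> ^ p)"
  proof (rule Bochner_Integration.integrable_bound)
    show "integrable M (\<lambda>x. 2 ^ p * (\<bar>f x\<bar> ^ p + \<bar>g x\<bar> ^ p))"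
      using assms unfolding in_Lp_def by auto
    show "AE x in M. norm (\<bar>f x + g x\<bar> ^ p) \<le> norm (2 ^ p * (\<bar>f x\<bar> ^ p + \<bar>g x\<bar> ^ p))"
      by (intro AE_I2) (simp add: abs_add_power_le)
  qed simp
  then show ?thesis unfolding in_Lp_def by simp
qed

lemma in_Lp_sum:
  assumes "0 < p" "\<And>i. i \<in> I \<Longrightarrow> in_Lp M p (f i)"
  shows "in_Lp M p (\<lambda>x. \<Sum>i\<in>I. f i x)"
  using assms(2)
  by (induct I rule: infinite_finite_induct) (simp_all add: in_Lp_zero[OF assms(1)] in_Lp_add)

lemma in_Lp_integrable:
  assumes "finite_measure M" "1 \<le> p" "in_Lp M p f"
  shows "integrable M f"
proof (rule Bochner_Integration.integrable_bound)
  show "integrable M (\<lambda>x. 1 + \<bar>f x\<bar> ^ p)"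
    using assms unfolding in_Lp_def by (simp add: finite_measure.integrable_const)
  show "f \<in> borel_measurable M" using assms unfolding in_Lp_def by auto
  have "\<bar>f x\<bar> \<le> 1 + \<bar>f x\<bar> ^ p" for x
  proof (cases "\<bar>f x\<bar> \<le> 1")
    case False
    then have "\<bar>f x\<bar> ^ 1 \<le> \<bar>f x\<bar> ^ p" by (intro power_increasing) (use assms(2) in auto)
    then show ?thesis by simp
  qed (simp add: add_increasing2)
  then show "AE x in M. norm (f x) \<le> norm (1 + \<bar>f x\<bar> ^ p)" by (intro AE_I2) simp
qed

lemma holder_prod_integrable:
  fixes f :: "nat \<Rightarrow> 'a \<Rightarrow> real"
  assumes p: "0 < p" and Lp: "\<And>k. k < p \<Longrightarrow> in_Lp M p (f k)"
    and nonneg: "\<And>k x. k < p \<Longrightarrow> 0 \<le> f k x"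
  shows "integrable M (\<lambda>x. \<Prod>k<p. f k x)"
proof (rule Bochner_Integration.integrable_bound)
  show "integrable M (\<lambda>x. (\<Sum>k<p. f k x ^ p) / real p)"
    using Lp nonneg unfolding in_Lp_def by (intro integrable_divide integrable_sum) auto
  show "(\<lambda>x. \<Prod>k<p. f k x) \<in> borel_measurable M"
    using Lp unfolding in_Lp_def by (intro borel_measurable_prod) auto
  have "norm (\<Prod>k<p. f k x) \<le> norm ((\<Sum>k<p. f k x ^ p) / real p)" for x
  proof -
    have "0 \<le> (\<Prod>k<p. f k x)" by (auto intro: prod_nonneg nonneg)
    moreover have "0 \<le> (\<Sum>k<p. f k x ^ p)" by (rule sum_nonneg) (simp add: nonneg)
    moreover have "(\<Prod>k<p. f k x) \<le> (\<Sum>k<p. f k x ^ p) / real p"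
      by (rule prod_le_mean_power) (use p nonneg in auto)
    ultimately show ?thesis by simp
  qed
  then show "AE x in M. norm (\<Prod>k<p. f k x) \<le> norm ((\<Sum>k<p. f k x ^ p) / real p)"
    by (intro AE_I2)
qed

text \<open>After normalising every factor to norm \<open>1\<close>, Hoelder's inequality is the integrated
  arithmetic-geometric mean inequality.\<close>

lemma holder_prod:
  fixes f :: "nat \<Rightarrow> 'a \<Rightarrow> real"
  assumes p: "0 < p" and Lp: "\<And>k. k < p \<Longrightarrow> in_Lp M p (f k)"
    and nonneg: "\<And>k x. k < p \<Longrightarrow> 0 \<le> f k x"
  shows "(\<integral>x. (\<Prod>k<p. f k x) \<partial>M) \<le> (\<Prod>k<p. Lp_norm M p (f k))"
proof (cases "\<exists>k<p. Lp_norm M p (f k) = 0")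
  case True
  then obtain j where j: "j < p" "Lp_norm M p (f j) = 0" by auto
  then have "(\<integral>x. \<bar>f j x\<bar> ^ p \<partial>M) = 0" using Lp_norm_power[OF p, of M "f j"] p by (simp add: zero_power)
  then have "AE x in M. \<bar>f j x\<bar> ^ p = 0"
    using integral_nonneg_eq_0_iff_AE[of M "\<lambda>x. \<bar>f j x\<bar> ^ p"] Lp[OF j(1)] unfolding in_Lp_def by auto
  then have "AE x in M. (\<Prod>k<p. f k x) = 0"
    by eventually_elim (use j in \<open>auto simp: prod_zero_iff\<close>)
  then have "(\<integral>x. (\<Prod>k<p. f k x) \<partial>M) = 0" by (rule integral_eq_zero_AE)
  then show ?thesis by (simp add: prod_nonneg Lp_norm_nonneg)
next
  case False
  define N where "N k = Lp_norm M p (f k)" for k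
  have N_pos: "N k > 0" if "k < p" for k
    using False Lp_norm_nonneg that unfolding N_def by (metis less_eq_real_def)
  have integrable_power: "integrable M (\<lambda>x. f k x ^ p)" if "k < p" for k
    using Lp[OF that] nonneg[OF that] unfolding in_Lp_def by auto
  have pointwise: "(\<Prod>k<p. f k x) \<le> (\<Prod>k<p. N k) * ((\<Sum>k<p. (f k x / N k) ^ p) / real p)" for x
  proof -
    have "(\<Prod>k<p. f k x) = (\<Prod>k<p. N k) * (\<Prod>k<p. f k x / N k)"
      using N_pos by (auto simp add: prod.distrib[symmetric] intro!: prod.cong) (metis less_irrefl)
    also have "\<dots> \<le> (\<Prod>k<p. N k) * ((\<Sum>k<p. (f k x / N k) ^ p) / real p)"
      using p nonneg N_pos
      by (intro mult_left_mono prod_le_mean_power prod_nonneg) (auto intro: less_imp_le divide_nonneg_pos)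
    finally show ?thesis .
  qed
  have normalised: "(\<integral>x. f k x ^ p \<partial>M) / N k ^ p = 1" if "k < p" for k
  proof -
    have "N k ^ p = (\<integral>x. f k x ^ p \<partial>M)"
      using Lp_norm_power[OF p, of M "f k"] nonneg[OF that] unfolding N_def by simp
    moreover have "N k ^ p > 0" using N_pos[OF that] by simp
    ultimately show ?thesis by simp
  qed
  have "(\<integral>x. (\<Prod>k<p. f k x) \<partial>M) \<le> (\<integral>x. (\<Prod>k<p. N k) * ((\<Sum>k<p. (f k x / N k) ^ p) / real p) \<partial>M)"
  proof (rule integral_mono[OF holder_prod_integrable[of p M f, OF p Lp nonneg] _ pointwise])
    show "integrable M (\<lambda>x. (\<Prod>k<p. N k) * ((\<Sum>k<p. (f k x / N k) ^ p) / real p))"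
      using integrable_power
      by (intro integrable_mult_right integrable_divide integrable_sum) (auto simp: power_divide)
  qed
  also have "\<dots> = (\<Prod>k<p. N k) * ((\<Sum>k<p. (\<integral>x. f k x ^ p \<partial>M) / N k ^ p) / real p)"
    using integrable_power by (simp add: power_divide Bochner_Integration.integral_sum)
  also have "\<dots> = (\<Prod>k<p. N k) * ((\<Sum>k<p. 1) / real p)"
    by (intro arg_cong[where f="\<lambda>z. _ * (z / _)"] sum.cong refl normalised) simp
  also have "\<dots> = (\<Prod>k<p. N k)"
    using p by simp
  finally show ?thesis unfolding N_def .
qed

lemma prod_lessThan_add:
  fixes n m :: nat
  shows "(\<Prod>k<n+m. f k) = (\<Prod>k<n. f k) * (\<Prod>k<m. f (n+k))"
  by (induct m) (simp_all add: mult.assoc)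

lemma prod_four_blocks:
  fixes A B C D :: "'b::comm_monoid_mult"
  shows "(\<Prod>k<i+j+l+r. if k<i then A else if k<i+j then B else if k<i+j+l then C else D)
     = A^i * B^j * C^l * D^r"
  unfolding prod_lessThan_add[of _ "i+j+l" r] prod_lessThan_add[of _ "i+j" l] prod_lessThan_add[of _ i j]
  by simp

lemma holder_four:
  fixes u v a b :: "'a \<Rightarrow> real"
  assumes p: "p = i+j+l+r" "0 < p"
    and Lp: "in_Lp M p u" "in_Lp M p v" "in_Lp M p a" "in_Lp M p b"
  shows "integrable M (\<lambda>x. \<bar>u x\<bar>^i * \<bar>v x\<bar>^j * \<bar>a x\<bar>^l * \<bar>b x\<bar>^r)"
    "(\<integral>x. \<bar>u x\<bar>^i * \<bar>v x\<bar>^j * \<bar>a x\<bar>^l * \<bar>b x\<bar>^r \<partial>M)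
       \<le> Lp_norm M p u ^ i * Lp_norm M p v ^ j * Lp_norm M p a ^ l * Lp_norm M p b ^ r"
proof -
  define f where "f = (\<lambda>k x. if k<i then \<bar>u x\<bar> else if k<i+j then \<bar>v x\<bar>
    else if k<i+j+l then \<bar>a x\<bar> else \<bar>b x\<bar>)"
  have Lp_f: "in_Lp M p (f k)" if "k < p" for k
    using Lp[THEN in_Lp_abs] unfolding f_def by (cases "k<i"; cases "k<i+j"; cases "k<i+j+l") auto
  have nonneg: "\<And>k x. k < p \<Longrightarrow> 0 \<le> f k x" unfolding f_def by auto
  have prod_f: "(\<Prod>k<p. f k x) = \<bar>u x\<bar>^i * \<bar>v x\<bar>^j * \<bar>a x\<bar>^l * \<bar>b x\<bar>^r" for x
    unfolding f_def p(1) by (rule prod_four_blocks)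
  have "(\<Prod>k<p. Lp_norm M p (f k)) = (\<Prod>k<i+j+l+r. if k<i then Lp_norm M p u
      else if k<i+j then Lp_norm M p v else if k<i+j+l then Lp_norm M p a else Lp_norm M p b)"
    unfolding p(1) by (rule prod.cong) (auto simp: f_def Lp_norm_abs)
  then have prod_norms: "(\<Prod>k<p. Lp_norm M p (f k))
      = Lp_norm M p u ^ i * Lp_norm M p v ^ j * Lp_norm M p a ^ l * Lp_norm M p b ^ r"
    by (simp add: prod_four_blocks)
  show "integrable M (\<lambda>x. \<bar>u x\<bar>^i * \<bar>v x\<bar>^j * \<bar>a x\<bar>^l * \<bar>b x\<bar>^r)"
    using holder_prod_integrable[of p M f, OF p(2) Lp_f nonneg] prod_f by simp
  show "(\<integral>x. \<bar>u x\<bar>^i * \<bar>v x\<bar>^j * \<bar>a x\<bar>^l * \<bar>b x\<bar>^r \<partial>M)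
       \<le> Lp_norm M p u ^ i * Lp_norm M p v ^ j * Lp_norm M p a ^ l * Lp_norm M p b ^ r"
    using holder_prod[of p M f, OF p(2) Lp_f nonneg] prod_f prod_norms by simp
qed

lemma minkowski:
  assumes "1 \<le> p" "in_Lp M p f" "in_Lp M p g"
  shows "Lp_norm M p (\<lambda>x. f x + g x) \<le> Lp_norm M p f + Lp_norm M p g"
proof -
  have p: "0 < p" using assms by simp
  define h where "h x = \<bar>f x + g x\<bar>" for x
  have Lp_h: "in_Lp M p h" unfolding h_def by (intro in_Lp_abs in_Lp_add assms)
  have holder: "integrable M (\<lambda>x. \<bar>k x\<bar> * \<bar>h x\<bar> ^ (p-1))"
      "(\<integral>x. \<bar>k x\<bar> * \<bar>h x\<bar> ^ (p-1) \<partial>M) \<le> Lp_norm M p k * Lp_norm M p h ^ (p-1)"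
    if "in_Lp M p k" for k
    using holder_four[of p 1 0 "p-1" 0 M k h h h] assms Lp_h p that by auto
  have pointwise: "\<bar>h x\<bar> ^ p \<le> \<bar>f x\<bar> * \<bar>h x\<bar> ^ (p-1) + \<bar>g x\<bar> * \<bar>h x\<bar> ^ (p-1)" for x
  proof -
    have "\<bar>h x\<bar> ^ p = \<bar>h x\<bar> * \<bar>h x\<bar> ^ (p-1)" using p by (simp add: power_eq_if)
    also have "\<dots> \<le> (\<bar>f x\<bar> + \<bar>g x\<bar>) * \<bar>h x\<bar> ^ (p-1)"
      by (intro mult_right_mono) (auto simp: h_def)
    finally show ?thesis by (simp add: distrib_right)
  qed
  have "Lp_norm M p h * Lp_norm M p h ^ (p-1) = (\<integral>x. \<bar>h x\<bar> ^ p \<partial>M)"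
    using Lp_norm_power[OF p, of M h] p by (simp add: power_eq_if)
  also have "\<dots> \<le> (\<integral>x. \<bar>f x\<bar> * \<bar>h x\<bar> ^ (p-1) + \<bar>g x\<bar> * \<bar>h x\<bar> ^ (p-1) \<partial>M)"
    using Lp_h holder(1) assms pointwise by (intro integral_mono) (auto simp: in_Lp_def)
  also have "\<dots> \<le> (Lp_norm M p f + Lp_norm M p g) * Lp_norm M p h ^ (p-1)"
    using holder assms by (simp add: distrib_right add_mono)
  finally have *: "Lp_norm M p h * Lp_norm M p h ^ (p-1)
      \<le> (Lp_norm M p f + Lp_norm M p g) * Lp_norm M p h ^ (p-1)" .
  have "Lp_norm M p h \<le> Lp_norm M p f + Lp_norm M p g"
  proof (cases "Lp_norm M p h = 0")
    case False
    then have "Lp_norm M p h ^ (p-1) > 0" using Lp_norm_nonneg[of M p h] by simp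
    then show ?thesis using * by simp
  qed (simp add: add_nonneg_nonneg Lp_norm_nonneg)
  then show ?thesis unfolding h_def Lp_norm_abs .
qed

lemma minkowski_sum:
  assumes "1 \<le> p" "\<And>i. i \<in> I \<Longrightarrow> in_Lp M p (f i)"
  shows "Lp_norm M p (\<lambda>x. \<Sum>i\<in>I. f i x) \<le> (\<Sum>i\<in>I. Lp_norm M p (f i))"
  using assms(2)
proof (induct I rule: infinite_finite_induct)
  case (insert i F)
  have "Lp_norm M p (\<lambda>x. \<Sum>i\<in>insert i F. f i x) = Lp_norm M p (\<lambda>x. f i x + (\<Sum>i\<in>F. f i x))"
    using insert by simp
  also have "\<dots> \<le> Lp_norm M p (f i) + Lp_norm M p (\<lambda>x. \<Sum>i\<in>F. f i x)"
    using assms(1) insert by (intro minkowski in_Lp_sum) auto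
  also have "\<dots> \<le> Lp_norm M p (f i) + (\<Sum>i\<in>F. Lp_norm M p (f i))" using insert by simp
  finally show ?case using insert by simp
qed (use assms(1) in \<open>simp_all add: Lp_norm_def\<close>)

lemma integral_le_sum_bounds:
  fixes f :: "'a \<Rightarrow> real" and T :: "'i \<Rightarrow> 'a \<Rightarrow> real"
  assumes "finite I" "f \<in> borel_measurable M" "\<And>i. i \<in> I \<Longrightarrow> integrable M (T i)"
    and dominated: "\<And>x. \<bar>f x\<bar> \<le> (\<Sum>i\<in>I. T i x)"
    and bounds: "\<And>i. i \<in> I \<Longrightarrow> (\<integral>x. T i x \<partial>M) \<le> B i"
  shows "integrable M f" "(\<integral>x. f x \<partial>M) \<le> (\<Sum>i\<in>I. B i)"
proof -
  have integrable_sum: "integrable M (\<lambda>x. \<Sum>i\<in>I. T i x)" using assms(3) by auto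
  show f: "integrable M f"
    using dominated by (intro Bochner_Integration.integrable_bound[OF integrable_sum assms(2)] AE_I2)
      (simp add: order_trans[OF _ abs_ge_self])
  have "(\<integral>x. f x \<partial>M) \<le> (\<integral>x. (\<Sum>i\<in>I. T i x) \<partial>M)"
    using dominated by (intro integral_mono[OF f integrable_sum]) (simp add: abs_le_iff)
  also have "\<dots> = (\<Sum>i\<in>I. (\<integral>x. T i x \<partial>M))" using assms(3) by simp
  also have "\<dots> \<le> (\<Sum>i\<in>I. B i)" using bounds by (rule sum_mono)
  finally show "(\<integral>x. f x \<partial>M) \<le> (\<Sum>i\<in>I. B i)" .
qed

section \<open>Elementary inequalities\<close>

lemma abs_power_diff_le:
  "\<bar>(a::real)^n - b^n\<bar> \<le> \<bar>a - b\<bar> * (\<Sum>i<n. \<bar>a\<bar>^i * \<bar>b\<bar>^(n - Suc i))"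
proof -
  have "\<bar>a^n - b^n\<bar> = \<bar>a - b\<bar> * \<bar>\<Sum>i<n. b^(n - Suc i) * a^i\<bar>"
    by (simp add: power_diff_sumr2 abs_mult)
  also have "\<bar>\<Sum>i<n. b^(n - Suc i) * a^i\<bar> \<le> (\<Sum>i<n. \<bar>a\<bar>^i * \<bar>b\<bar>^(n - Suc i))"
    by (rule order_trans[OF sum_abs]) (simp add: abs_mult power_abs mult.commute)
  finally show ?thesis by (simp add: mult_left_mono)
qed

lemma power_diff_first_order_remainder:
  fixes a b :: real
  shows "a^p - b^p - real p * b^(p-1) * (a-b) = (a-b)^2 * (\<Sum>k<p. \<Sum>i<k. a^i * b^(p-2-i))"
proof -
  have remainder: "b^(p - Suc k) * a^k - b^(p-1) = (a-b) * (\<Sum>i<k. a^i * b^(p-2-i))"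
    if "k < p" for k
  proof -
    have "b^(p - Suc k) * a^k - b^(p-1) = b^(p - Suc k) * (a^k - b^k)"
      using that by (simp add: power_add[symmetric] algebra_simps)
    also have "\<dots> = (a-b) * (\<Sum>i<k. b^(p - Suc k) * b^(k - Suc i) * a^i)"
      by (simp add: power_diff_sumr2 sum_distrib_left mult_ac)
    also have "(\<Sum>i<k. b^(p - Suc k) * b^(k - Suc i) * a^i) = (\<Sum>i<k. a^i * b^(p-2-i))"
    proof (rule sum.cong)
      fix i assume "i \<in> {..<k}"
      then have "(p - Suc k) + (k - Suc i) = p - 2 - i" using that by auto
      then show "b^(p - Suc k) * b^(k - Suc i) * a^i = a^i * b^(p-2-i)"
        by (metis power_add mult.commute)
    qed simp
    finally show ?thesis .
  qed
  have "a^p - b^p - real p * b^(p-1) * (a-b) = (a-b) * (\<Sum>k<p. b^(p - Suc k) * a^k - b^(p-1))"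
    by (simp add: power_diff_sumr2 sum_subtractf algebra_simps)
  also have "\<dots> = (a-b) * (\<Sum>k<p. (a-b) * (\<Sum>i<k. a^i * b^(p-2-i)))"
    using remainder by (intro arg_cong[where f="\<lambda>z. (a-b) * z"] sum.cong) auto
  also have "\<dots> = (a-b)^2 * (\<Sum>k<p. \<Sum>i<k. a^i * b^(p-2-i))"
    by (simp add: sum_distrib_left[symmetric] power2_eq_square mult_ac)
  finally show ?thesis .
qed

lemma abs_power_diff_first_order_remainder_le:
  fixes a b :: real
  shows "\<bar>a^p - b^p - real p * b^(p-1) * (a-b)\<bar>
    \<le> (a-b)^2 * (\<Sum>k<p. \<Sum>i<k. \<bar>a\<bar>^i * \<bar>b\<bar>^(p-2-i))"
proof -
  have "\<bar>\<Sum>k<p. \<Sum>i<k. a^i * b^(p-2-i)\<bar> \<le> (\<Sum>k<p. \<Sum>i<k. \<bar>a\<bar>^i * \<bar>b\<bar>^(p-2-i))"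
    by (rule order_trans[OF sum_abs], rule sum_mono, rule order_trans[OF sum_abs])
      (simp add: abs_mult power_abs)
  then show ?thesis
    unfolding power_diff_first_order_remainder by (simp add: abs_mult mult_left_mono)
qed

lemma power_Suc_add_one_ge: "(x + 1) ^ Suc k \<ge> x ^ Suc k + real (Suc k) * x ^ k" if "0 \<le> (x::real)"
proof (induct k)
  case (Suc k)
  have "x ^ Suc (Suc k) + real (Suc (Suc k)) * x ^ Suc k
      \<le> x ^ Suc (Suc k) + real (Suc (Suc k)) * x ^ Suc k + real (Suc k) * x ^ k"
    using that by simp
  also have "\<dots> = (x + 1) * (x ^ Suc k + real (Suc k) * x ^ k)"
    by (simp add: algebra_simps)
  also have "\<dots> \<le> (x + 1) ^ Suc (Suc k)"
    using Suc that by (simp add: mult_left_mono)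
  finally show ?case .
qed simp

lemma sum_power_lessThan_le:
  assumes "1 \<le> m"
  shows "(\<Sum>j<n. real j ^ (m-1)) \<le> real n ^ m / real m"
proof (induct n)
  case (Suc n)
  have "(\<Sum>j<Suc n. real j ^ (m-1)) \<le> real n ^ m / real m + real n ^ (m-1)"
    using Suc by simp
  also have "\<dots> = (real n ^ m + real m * real n ^ (m-1)) / real m"
    using assms by (simp add: field_simps)
  also have "\<dots> \<le> (real n + 1) ^ m / real m"
    using power_Suc_add_one_ge[of "real n" "m-1"] assms by (intro divide_right_mono) auto
  finally show ?case by (simp add: add.commute)
qed (use assms in simp)

lemma power_two_mult_minus_two: "(x::real) ^ (2*m-2) = (x^2) ^ (m-1)"
  by (simp add: power_mult[symmetric] right_diff_distrib' mult.commute)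

lemma sum_max_power_le:
  fixes s :: "nat \<Rightarrow> real"
  assumes "1 \<le> m" "0 \<le> c" "\<And>k. 0 \<le> s k"
    and bound: "\<And>j. j < n \<Longrightarrow> s j ^ 2 \<le> c * real j * A\<^sup>2"
  shows "(\<Sum>j=1..n-1. max (s j) (s (j-1)) ^ (2*m-2)) \<le> (c * A\<^sup>2) ^ (m-1) * (real n ^ m / real m)"
proof -
  have term_le: "max (s j) (s (j-1)) ^ (2*m-2) \<le> (c * A\<^sup>2) ^ (m-1) * real j ^ (m-1)"
    if "j \<in> {1..n-1}" for j
  proof -
    have "s (j-1) ^ 2 \<le> c * real (j-1) * A\<^sup>2" by (rule bound) (use that in auto)
    also have "\<dots> \<le> c * real j * A\<^sup>2" using assms(2) by (intro mult_right_mono mult_left_mono) auto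
    finally have "max (s j) (s (j-1)) ^ 2 \<le> c * real j * A\<^sup>2"
      using bound[of j] that by (auto simp: max_def)
    then have "(max (s j) (s (j-1)) ^ 2) ^ (m-1) \<le> (c * real j * A\<^sup>2) ^ (m-1)"
      by (intro power_mono) auto
    then show ?thesis unfolding power_two_mult_minus_two by (simp add: power_mult_distrib mult_ac)
  qed
  have "(\<Sum>j=1..n-1. max (s j) (s (j-1)) ^ (2*m-2)) \<le> (\<Sum>j=1..n-1. (c * A\<^sup>2) ^ (m-1) * real j ^ (m-1))"
    by (rule sum_mono) (rule term_le)
  also have "\<dots> \<le> (c * A\<^sup>2) ^ (m-1) * (\<Sum>j<n. real j ^ (m-1))"
    unfolding sum_distrib_left[symmetric] using assms(2) by (intro mult_left_mono sum_mono2) auto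
  also have "\<dots> \<le> (c * A\<^sup>2) ^ (m-1) * (real n ^ m / real m)"
    using assms(2) by (intro mult_left_mono sum_power_lessThan_le[OF assms(1)]) auto
  finally show ?thesis .
qed

text \<open>Since s grows at most linearly, the claimed bound can first fail only at some n > 3m; there
  the bound at all earlier indices makes the right-hand side of the recursion too small.\<close>

lemma moment_recursion_bound:
  fixes s :: "nat \<Rightarrow> real" and A :: real and m :: nat
  assumes m: "1 \<le> m" and nonneg: "\<And>k. 0 \<le> s k" and linear: "\<And>k. s k \<le> real k * A"
    and recursion: "\<And>n. s n ^ (2*m)
      \<le> real m * (2 * real m - 1) * A\<^sup>2 * (\<Sum>j=1..n. max (s j) (s (j-1)) ^ (2*m-2))"
  shows "s n ^ 2 \<le> 3 * real m * real n * A\<^sup>2"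
proof (induct n rule: less_induct)
  case (less n)
  let ?c = "3 * real m"
  show ?case
  proof (cases "real n \<le> ?c")
    case True
    have "s n ^ 2 \<le> (real n * A) ^ 2" using linear[of n] nonneg[of n] by (intro power_mono) auto
    also have "\<dots> = real n * (real n * A\<^sup>2)" by (simp add: power2_eq_square)
    also have "\<dots> \<le> ?c * (real n * A\<^sup>2)" using True by (intro mult_right_mono) auto
    finally show ?thesis by (simp add: mult.assoc)
  next
    case False
    show ?thesis
    proof (rule ccontr)
      assume "\<not> ?thesis"
      then have big: "?c * real n * A\<^sup>2 < s n ^ 2" by simp
      have n: "1 \<le> n" using False m by (cases n) auto
      have "s (n-1) ^ 2 \<le> ?c * real (n-1) * A\<^sup>2" by (rule less) (use n in auto)
      also have "\<dots> \<le> ?c * real n * A\<^sup>2" by (intro mult_right_mono mult_left_mono) auto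
      finally have "s (n-1) ^ 2 < s n ^ 2" using big by simp
      then have "s (n-1) < s n" using nonneg[of n] by (rule power_less_imp_less_base)
      moreover have "{1..n} = insert n {1..n-1}" using n by auto
      ultimately have split: "(\<Sum>j=1..n. max (s j) (s (j-1)) ^ (2*m-2))
          = s n ^ (2*m-2) + (\<Sum>j=1..n-1. max (s j) (s (j-1)) ^ (2*m-2))"
        using n by simp
      have "(\<Sum>j=1..n-1. max (s j) (s (j-1)) ^ (2*m-2)) \<le> (?c * A\<^sup>2) ^ (m-1) * (real n ^ m / real m)"
        using less m nonneg by (intro sum_max_power_le) auto
      also have "\<dots> = (real n / real m) * (?c * real n * A\<^sup>2) ^ (m-1)"
        using m by (cases m) (simp_all add: power_mult_distrib)
      also have "\<dots> \<le> (real n / real m) * s n ^ (2*m-2)"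
        unfolding power_two_mult_minus_two using big by (intro mult_left_mono power_mono) auto
      finally have rest: "(\<Sum>j=1..n-1. max (s j) (s (j-1)) ^ (2*m-2)) \<le> (real n / real m) * s n ^ (2*m-2)" .
      have coefficient: "0 \<le> real m * (2 * real m - 1) * A\<^sup>2" using m by simp
      have "s n ^ 2 * s n ^ (2*m-2) = s n ^ (2*m)"
        using m by (metis power_add le_add_diff_inverse mult_le_mono2 mult_1_right)
      also have "\<dots> \<le> real m * (2 * real m - 1) * A\<^sup>2 * (s n ^ (2*m-2) + (real n / real m) * s n ^ (2*m-2))"
        using recursion[of n] unfolding split
        by (rule order_trans) (intro mult_left_mono add_left_mono rest coefficient)
      also have "\<dots> = ((2 * real m - 1) * (real m + real n) * A\<^sup>2) * s n ^ (2*m-2)"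
        using m by (simp add: field_simps)
      finally have "s n ^ 2 * s n ^ (2*m-2) \<le> ((2 * real m - 1) * (real m + real n) * A\<^sup>2) * s n ^ (2*m-2)" .
      moreover have "0 < s n ^ (2*m-2)"
      proof -
        have "0 < s n ^ 2" by (rule le_less_trans[OF _ big]) simp
        then show ?thesis unfolding power_two_mult_minus_two by simp
      qed
      ultimately have "s n ^ 2 \<le> (2 * real m - 1) * (real m + real n) * A\<^sup>2" by simp
      also have "\<dots> \<le> ?c * real n * A\<^sup>2"
      proof (intro mult_right_mono)
        have "real m * (2 * real m - 1) \<le> (real m + 1) * (3 * real m)" using m by (simp add: algebra_simps)
        also have "\<dots> \<le> (real m + 1) * real n" using False by (intro mult_left_mono) auto
        finally show "(2 * real m - 1) * (real m + real n) \<le> ?c * real n" by (simp add: algebra_simps)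
      qed simp
      finally show False using big by simp
    qed
  qed
qed

lemma square_add_double_mult_le:
  fixes a b c :: real
  assumes "0 \<le> a" "0 \<le> b" "a + b \<le> c"
  shows "a\<^sup>2 + 2 * a * b \<le> c\<^sup>2"
proof -
  have "a\<^sup>2 + 2 * a * b \<le> (a + b)\<^sup>2" by (simp add: power2_eq_square algebra_simps)
  also have "\<dots> \<le> c\<^sup>2" using assms by (intro power_mono) auto
  finally show ?thesis .
qed

lemma power_sum_le_card_mult_sum_power:
  fixes y :: "'d::finite \<Rightarrow> real"
  assumes "\<And>c. 0 \<le> y c" "1 \<le> m"
  shows "(\<Sum>c\<in>UNIV. y c) ^ m \<le> real CARD('d) ^ (m-1) * (\<Sum>c\<in>UNIV. y c ^ m)"
proof -
  define d where "d = real CARD('d)"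
  have d: "d > 0" unfolding d_def by simp
  have convex: "convex_on {0::real..} (\<lambda>x. x ^ m)"
    by (cases "even m") (auto intro: convex_power_odd convex_on_subset[OF convex_power_even])
  have "(\<Sum>c\<in>UNIV. (1/d) *\<^sub>R y c) ^ m \<le> (\<Sum>c\<in>UNIV. (1/d) * y c ^ m)"
    by (rule convex_on_sum[OF _ _ convex]) (use assms d in \<open>auto simp: d_def\<close>)
  then have jensen: "((\<Sum>c\<in>UNIV. y c) / d) ^ m \<le> (\<Sum>c\<in>UNIV. y c ^ m) / d"
    by (simp add: sum_divide_distrib)
  have "(\<Sum>c\<in>UNIV. y c) ^ m = d ^ m * ((\<Sum>c\<in>UNIV. y c) / d) ^ m"
    using d by (simp add: power_divide)
  also have "\<dots> \<le> d ^ m * ((\<Sum>c\<in>UNIV. y c ^ m) / d)"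
    using jensen d by (intro mult_left_mono) auto
  also have "\<dots> = d ^ (m-1) * (\<Sum>c\<in>UNIV. y c ^ m)"
    using d assms(2) by (cases m) auto
  finally show ?thesis unfolding d_def .
qed

lemma norm_power_le_sum_component_power:
  fixes v :: "real ^ 'd"
  assumes "1 \<le> m"
  shows "norm v ^ (2*m) \<le> real CARD('d) ^ (m-1) * (\<Sum>c\<in>UNIV. (v $ c) ^ (2*m))"
proof -
  have "norm v ^ 2 = (\<Sum>c\<in>UNIV. (v $ c) ^ 2)"
    unfolding norm_vec_def L2_set_def by (simp add: sum_nonneg)
  then have "norm v ^ (2*m) = (\<Sum>c\<in>UNIV. (v $ c) ^ 2) ^ m" by (simp add: power_mult)
  also have "\<dots> \<le> real CARD('d) ^ (m-1) * (\<Sum>c\<in>UNIV. ((v $ c) ^ 2) ^ m)"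
    by (rule power_sum_le_card_mult_sum_power) (use assms in auto)
  finally show ?thesis by (simp add: power_mult)
qed

lemma one_plus_inverse_power_le_3: "1 \<le> m \<Longrightarrow> (1 + 1 / real m) ^ m \<le> 3"
  using exp_ge_one_plus_x_over_n_power_n[of m 1] e_less_272 by simp

lemma three_mult_power_le_fact: "1 \<le> m \<Longrightarrow> (3 * real m) ^ m \<le> 3 * fact (2*m)"
proof (induct m rule: dec_induct)
  case (step m)
  show ?case
  proof (cases "m = 1")
    case False
    then have m: "2 \<le> m" using step(1) by simp
    have "3 * real (Suc m) = 3 * real m * (1 + 1 / real m)" using m by (simp add: field_simps)
    then have "(3 * real (Suc m)) ^ Suc m = 3 * real (Suc m) * ((3 * real m) ^ m * (1 + 1 / real m) ^ m)"
      by (metis power_Suc power_mult_distrib)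
    also have "\<dots> \<le> 3 * real (Suc m) * (3 * fact (2*m) * 3)"
      using step(3) one_plus_inverse_power_le_3[OF step(1)] by (intro mult_left_mono mult_mono) auto
    also have "\<dots> \<le> 3 * ((real (2*m) + 2) * (real (2*m) + 1) * fact (2*m))"
    proof -
      have "2 * real m \<le> real m * real m" using m by (intro mult_right_mono) auto
      then have "9 * real m + 9 \<le> 4 * (real m * real m) + 6 * real m + 2" using m by linarith
      then have "9 * real (Suc m) \<le> (real (2*m) + 2) * (real (2*m) + 1)"
        by (simp add: algebra_simps)
      then show ?thesis by (simp add: mult_right_mono mult_ac)
    qed
    also have "\<dots> = 3 * fact (2 * Suc m)" by (simp add: algebra_simps)
    finally show ?thesis .
  qed (simp add: numeral_eq_Suc)
qed (simp add: numeral_eq_Suc)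

section \<open>Real adapted sequences\<close>

locale adapted_moments =
  fixes M :: "'a measure" and G :: "nat \<Rightarrow> 'a measure" and X :: "nat \<Rightarrow> 'a \<Rightarrow> real"
    and m :: nat and A :: real
  assumes prob_space_M: "prob_space M"
    and subalgebra_G: "\<And>i. 1 \<le> i \<Longrightarrow> subalgebra M (G i)"
    and G_mono: "\<And>i j. 1 \<le> i \<Longrightarrow> i \<le> j \<Longrightarrow> sets (G i) \<subseteq> sets (G j)"
    and X_measurable: "\<And>j. 1 \<le> j \<Longrightarrow> X j \<in> borel_measurable (G j)"
    and X_in_Lp: "\<And>j. 1 \<le> j \<Longrightarrow> in_Lp M (2*m) (X j)"
    and Y_in_Lp: "\<And>i j. 1 \<le> i \<Longrightarrow> i \<le> j \<Longrightarrow> in_Lp M (2*m) (real_cond_exp M (G i) (X j))"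
    and m: "1 \<le> m"
    and A_bound: "\<And>i k. 1 \<le> i \<Longrightarrow> (\<Sum>j=i..k. Lp_norm M (2*m) (real_cond_exp M (G i) (X j))) \<le> A"
begin

definition "S n x = (\<Sum>j=1..n. X j x)"
definition "Y i j = real_cond_exp M (G i) (X j)"
definition "V n j x = (\<Sum>i\<in>{j<..n}. Y j i x)"
definition "D j x = real (2*m) * (S j x ^ (2*m-1) - S (j-1) x ^ (2*m-1))"
definition "R j x = S j x ^ (2*m) - S (j-1) x ^ (2*m) - real (2*m) * S (j-1) x ^ (2*m-1) * X j x"
definition "s k = Lp_norm M (2*m) (S k)"
definition "maxpow j = max (s j) (s (j-1)) ^ (2*m-2)"

lemma two_m_pos: "0 < 2*m" using m by simp
lemma one_le_two_m: "1 \<le> 2*m" using m by simp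

lemma finite_M: "finite_measure M" using prob_space_M by (simp add: prob_space_def)

lemma sigma_finite_G: "1 \<le> i \<Longrightarrow> sigma_finite_subalgebra M (G i)"
  by (rule finite_measure_subalgebra_is_sigma_finite)
     (simp add: finite_measure_subalgebra_def finite_measure_subalgebra_axioms_def finite_M subalgebra_G)

lemma X_borel_measurable[measurable]: "1 \<le> j \<Longrightarrow> X j \<in> borel_measurable M"
  using X_in_Lp unfolding in_Lp_def by auto

lemma X_measurable_G: assumes "1 \<le> k" "k \<le> j" shows "X k \<in> borel_measurable (G j)"
proof -
  have "subalgebra (G j) (G k)" using subalgebra_G[of j] subalgebra_G[of k] G_mono[of k j] assms
    unfolding subalgebra_def by auto
  then show ?thesis using X_measurable[OF assms(1)] by (rule measurable_from_subalg)
qed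

lemma S_measurable_G: assumes "k \<le> j" "1 \<le> j" shows "S k \<in> borel_measurable (G j)"
  unfolding S_def[abs_def] using assms by (intro borel_measurable_sum X_measurable_G) auto

lemma X_integrable: "1 \<le> j \<Longrightarrow> integrable M (X j)" using in_Lp_integrable[OF finite_M one_le_two_m X_in_Lp] .

lemma S_in_Lp: "in_Lp M (2*m) (S n)" unfolding S_def[abs_def] by (intro in_Lp_sum two_m_pos X_in_Lp) auto

lemma S_borel_measurable[measurable]: "S n \<in> borel_measurable M" using S_in_Lp unfolding in_Lp_def by auto

lemma S_0: "S 0 x = 0" unfolding S_def by simp
lemma S_Suc: "S (Suc n) x = S n x + X (Suc n) x" unfolding S_def by simp
lemma S_step: "1 \<le> j \<Longrightarrow> S j x = S (j-1) x + X j x" using S_Suc[of "j-1"] by simp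

lemma Y_self_AE: "1 \<le> j \<Longrightarrow> AE x in M. Y j j x = X j x"
  unfolding Y_def using sigma_finite_subalgebra.real_cond_exp_F_meas[OF sigma_finite_G X_integrable X_measurable] .

lemma Lp_norm_X_eq_Y: assumes "1 \<le> j" shows "Lp_norm M (2*m) (X j) = Lp_norm M (2*m) (Y j j)"
proof (rule Lp_norm_cong_AE)
  from Y_self_AE[OF assms] show "AE x in M. X j x = Y j j x" by eventually_elim simp
qed (use assms in \<open>auto simp: Y_def\<close>)

lemma V_in_Lp: "1 \<le> j \<Longrightarrow> in_Lp M (2*m) (V n j)"
  unfolding V_def[abs_def] Y_def by (intro in_Lp_sum two_m_pos Y_in_Lp) auto

lemma Lp_norm_X_add_V_le: assumes "1 \<le> j" "j \<le> n"
  shows "Lp_norm M (2*m) (X j) + Lp_norm M (2*m) (V n j) \<le> A"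
proof -
  have "Lp_norm M (2*m) (V n j) \<le> (\<Sum>i\<in>{j<..n}. Lp_norm M (2*m) (Y j i))"
    unfolding V_def[abs_def] by (rule minkowski_sum[OF one_le_two_m]) (use assms in \<open>auto simp: Y_def intro: Y_in_Lp\<close>)
  moreover have "{j..n} = insert j {j<..n}" using assms by auto
  then have "(\<Sum>i=j..n. Lp_norm M (2*m) (Y j i)) = Lp_norm M (2*m) (Y j j) + (\<Sum>i\<in>{j<..n}. Lp_norm M (2*m) (Y j i))"
    by simp
  moreover have "(\<Sum>i=j..n. Lp_norm M (2*m) (Y j i)) \<le> A" using A_bound[OF assms(1)] unfolding Y_def .
  ultimately show ?thesis using Lp_norm_X_eq_Y[OF assms(1)] by simp
qed

lemma maxpow_ge: assumes "l \<le> 2*m-2" shows "s j ^ l * s (j-1) ^ (2*m-2-l) \<le> maxpow j"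
proof -
  have h0: "0 \<le> s j" "0 \<le> s (j-1)" by (simp_all add: s_def Lp_norm_nonneg)
  have "s j ^ l * s (j-1) ^ (2*m-2-l) \<le> max (s j) (s (j-1)) ^ l * max (s j) (s (j-1)) ^ (2*m-2-l)"
    using h0 by (intro mult_mono power_mono) auto
  also have "\<dots> = maxpow j"
  proof -
    have "l + (2*m-2-l) = 2*m-2" using assms by simp
    then show ?thesis unfolding maxpow_def by (metis power_add)
  qed
  finally show ?thesis .
qed

lemma maxpow_nonneg: "0 \<le> maxpow j"
proof -
  have "0 \<le> max (s j) (s (j-1))" by (simp add: s_def Lp_norm_nonneg le_max_iff_disj)
  then show ?thesis unfolding maxpow_def by simp
qed


lemma integral_D_mult_le:
  assumes j: "1 \<le> j" and W: "in_Lp M (2*m) W"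
  shows "integrable M (\<lambda>x. D j x * W x)"
    "(\<integral>x. D j x * W x \<partial>M)
      \<le> real (2*m) * real (2*m-1) * Lp_norm M (2*m) (X j) * Lp_norm M (2*m) W * maxpow j"
proof -
  let ?p = "2*m"
  let ?B = "real ?p * (Lp_norm M ?p (X j) * Lp_norm M ?p W * maxpow j)"
  define T where "T l x = real ?p * (\<bar>X j x\<bar>^1 * \<bar>W x\<bar>^1 * \<bar>S j x\<bar>^l * \<bar>S (j-1) x\<bar>^(?p-2-l))" for l x
  have holder: "integrable M (T l) \<and> (\<integral>x. T l x \<partial>M) \<le> ?B" if "l \<in> {..<?p-1}" for l
  proof -
    let ?f = "\<lambda>x. \<bar>X j x\<bar>^1 * \<bar>W x\<bar>^1 * \<bar>S j x\<bar>^l * \<bar>S (j-1) x\<bar>^(?p-2-l)"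
    have "integrable M ?f \<and>
        (\<integral>x. ?f x \<partial>M) \<le> Lp_norm M ?p (X j) * Lp_norm M ?p W * (s j ^ l * s (j-1) ^ (?p-2-l))"
      using holder_four[of ?p 1 1 l "?p-2-l" M "X j" W "S j" "S (j-1)"] that two_m_pos X_in_Lp[OF j] W S_in_Lp
      unfolding s_def by (auto simp: mult_ac)
    moreover have "Lp_norm M ?p (X j) * Lp_norm M ?p W * (s j ^ l * s (j-1) ^ (?p-2-l))
        \<le> Lp_norm M ?p (X j) * Lp_norm M ?p W * maxpow j"
      using that by (intro mult_left_mono maxpow_ge) (auto simp: Lp_norm_nonneg)
    ultimately have "integrable M ?f \<and> (\<integral>x. ?f x \<partial>M) \<le> Lp_norm M ?p (X j) * Lp_norm M ?p W * maxpow j"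
      by linarith
    then show ?thesis unfolding T_def by (simp add: mult_left_mono)
  qed
  have [measurable]: "W \<in> borel_measurable M" using W unfolding in_Lp_def by auto
  have dominated: "\<bar>D j x * W x\<bar> \<le> (\<Sum>l<?p-1. T l x)" for x
  proof -
    have "\<bar>D j x\<bar> \<le> real ?p * (\<bar>X j x\<bar> * (\<Sum>l<?p-1. \<bar>S j x\<bar>^l * \<bar>S (j-1) x\<bar>^(?p - 1 - Suc l)))"
      unfolding D_def using abs_power_diff_le[of "S j x" "?p-1" "S (j-1) x"] S_step[OF j, of x]
      by (auto simp: abs_mult intro!: mult_left_mono)
    then have "\<bar>D j x * W x\<bar>
        \<le> real ?p * (\<bar>X j x\<bar> * (\<Sum>l<?p-1. \<bar>S j x\<bar>^l * \<bar>S (j-1) x\<bar>^(?p - 1 - Suc l))) * \<bar>W x\<bar>"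
      by (simp add: abs_mult mult_right_mono)
    also have "\<dots> = (\<Sum>l<?p-1. T l x)"
      unfolding T_def by (simp add: sum_distrib_left sum_distrib_right mult_ac)
    finally show ?thesis .
  qed
  have [measurable]: "(\<lambda>x. D j x * W x) \<in> borel_measurable M" unfolding D_def by measurable
  note bounds = integral_le_sum_bounds[OF _ _ conjunct1[OF holder] dominated conjunct2[OF holder]]
  show "integrable M (\<lambda>x. D j x * W x)" by (rule bounds(1)) simp_all
  have "(\<integral>x. D j x * W x \<partial>M) \<le> (\<Sum>l<?p-1. ?B)" by (rule bounds(2)) simp_all
  then show "(\<integral>x. D j x * W x \<partial>M)
      \<le> real (2*m) * real (2*m-1) * Lp_norm M (2*m) (X j) * Lp_norm M (2*m) W * maxpow j"
    by (simp add: mult_ac)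
qed

lemma integral_R_le:
  assumes j: "1 \<le> j"
  shows "integrable M (R j)"
    "(\<integral>x. R j x \<partial>M) \<le> real (2*m) * (real (2*m) - 1) / 2 * Lp_norm M (2*m) (X j) ^ 2 * maxpow j"
proof -
  let ?p = "2*m"
  let ?B = "Lp_norm M ?p (X j) ^ 2 * maxpow j"
  let ?I = "SIGMA k:{..<?p}. {..<k}"
  define T :: "nat \<times> nat \<Rightarrow> 'a \<Rightarrow> real"
    where "T ki x = \<bar>X j x\<bar>^2 * \<bar>X j x\<bar>^0 * \<bar>S j x\<bar>^snd ki * \<bar>S (j-1) x\<bar>^(?p-2-snd ki)"
    for ki x
  have holder: "integrable M (T ki) \<and> (\<integral>x. T ki x \<partial>M) \<le> ?B" if mem: "ki \<in> ?I" for ki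
  proof -
    obtain k i where ki: "ki = (k, i)" "i < k" "k < ?p" using mem by (cases ki) auto
    have "integrable M (T ki) \<and>
        (\<integral>x. T ki x \<partial>M) \<le> Lp_norm M ?p (X j) ^ 2 * (s j ^ i * s (j-1) ^ (?p-2-i))"
      using holder_four[of ?p 2 0 i "?p-2-i" M "X j" "X j" "S j" "S (j-1)"] ki two_m_pos X_in_Lp[OF j] S_in_Lp
      unfolding T_def s_def by (auto simp: mult_ac)
    moreover have "Lp_norm M ?p (X j) ^ 2 * (s j ^ i * s (j-1) ^ (?p-2-i)) \<le> ?B"
      using ki by (intro mult_left_mono maxpow_ge) auto
    ultimately show ?thesis by linarith
  qed
  have [measurable]: "R j \<in> borel_measurable M" unfolding R_def[abs_def] using j by measurable
  have dominated: "\<bar>R j x\<bar> \<le> (\<Sum>ki\<in>?I. T ki x)" for x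
  proof -
    have "\<bar>R j x\<bar> \<le> (S j x - S (j-1) x)^2 * (\<Sum>k<?p. \<Sum>i<k. \<bar>S j x\<bar>^i * \<bar>S (j-1) x\<bar>^(?p-2-i))"
      unfolding R_def using abs_power_diff_first_order_remainder_le[of "S j x" ?p "S (j-1) x"] S_step[OF j, of x]
      by simp
    also have "\<dots> = (\<Sum>k<?p. \<Sum>i<k. T (k, i) x)"
      unfolding T_def using S_step[OF j, of x] by (simp add: sum_distrib_left mult_ac)
    also have "\<dots> = (\<Sum>ki\<in>?I. T ki x)"
      by (subst sum.Sigma) (simp_all add: case_prod_eta)
    finally show ?thesis .
  qed
  have gauss: "(\<Sum>k<n. real k) = real n * (real n - 1) / 2" for n
    by (induct n) (simp_all add: field_simps)
  note bounds = integral_le_sum_bounds[OF _ _ conjunct1[OF holder] dominated conjunct2[OF holder]]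
  show "integrable M (R j)" by (rule bounds(1)) simp_all
  have "(\<integral>x. R j x \<partial>M) \<le> (\<Sum>ki\<in>?I. ?B)" by (rule bounds(2)) simp_all
  also have "\<dots> = real (\<Sum>k<?p. k) * ?B" by simp
  also have "\<dots> = real (2*m) * (real (2*m) - 1) / 2 * Lp_norm M (2*m) (X j) ^ 2 * maxpow j"
    unfolding of_nat_sum gauss by simp
  finally show "(\<integral>x. R j x \<partial>M) \<le> real (2*m) * (real (2*m) - 1) / 2 * Lp_norm M (2*m) (X j) ^ 2 * maxpow j" .
qed

lemma D_measurable_G: "1 \<le> j \<Longrightarrow> D j \<in> borel_measurable (G j)"
  using S_measurable_G[of j j] S_measurable_G[of "j-1" j] unfolding D_def[abs_def] by measurable

lemma integral_D_mult_X_eq: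
  assumes "1 \<le> j" "j \<le> i"
  shows "(\<integral>x. D j x * X i x \<partial>M) = (\<integral>x. D j x * Y j i x \<partial>M)"
  unfolding Y_def
  by (rule sigma_finite_subalgebra.real_cond_exp_intg(2)[OF sigma_finite_G, symmetric])
     (use assms integral_D_mult_le(1)[OF assms(1) X_in_Lp] D_measurable_G in auto)

lemma sum_D: "(\<Sum>j=1..n. D j x) = real (2*m) * S n x ^ (2*m-1)"
  by (induct n) (use m in \<open>simp_all add: S_0 D_def algebra_simps\<close>)

lemma integral_S_Suc_power:
  "(\<integral>x. S (Suc n) x ^ (2*m) \<partial>M) = (\<integral>x. S n x ^ (2*m) \<partial>M)
     + (\<Sum>j=1..n. (\<integral>x. D j x * Y j (Suc n) x \<partial>M)) + (\<integral>x. R (Suc n) x \<partial>M)"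
proof -
  let ?p = "2*m"
  have integrable_S: "integrable M (\<lambda>x. S n x ^ ?p)"
    using S_in_Lp[of n] unfolding in_Lp_def by (simp add: power_even_abs)
  have integrable_DX: "integrable M (\<lambda>x. D j x * X (Suc n) x)" if "j \<in> {1..n}" for j
    using integral_D_mult_le(1)[of j "X (Suc n)"] X_in_Lp that by auto
  have integrable_sum: "integrable M (\<lambda>x. \<Sum>j=1..n. D j x * X (Suc n) x)"
    using integrable_DX by (intro Bochner_Integration.integrable_sum) auto
  have expand: "S (Suc n) x ^ ?p = S n x ^ ?p + (\<Sum>j=1..n. D j x * X (Suc n) x) + R (Suc n) x" for x
    unfolding R_def sum_distrib_right[symmetric] sum_D by simp
  have "(\<integral>x. S (Suc n) x ^ ?p \<partial>M)
      = (\<integral>x. S n x ^ ?p + (\<Sum>j=1..n. D j x * X (Suc n) x) \<partial>M) + (\<integral>x. R (Suc n) x \<partial>M)"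
    unfolding expand using integrable_S integrable_sum integral_R_le(1)[of "Suc n"]
    by (intro Bochner_Integration.integral_add Bochner_Integration.integrable_add) auto
  also have "(\<integral>x. S n x ^ ?p + (\<Sum>j=1..n. D j x * X (Suc n) x) \<partial>M)
      = (\<integral>x. S n x ^ ?p \<partial>M) + (\<Sum>j=1..n. (\<integral>x. D j x * X (Suc n) x \<partial>M))"
    using integrable_S integrable_sum integrable_DX
    by (subst Bochner_Integration.integral_add) (auto simp: Bochner_Integration.integral_sum)
  also have "(\<Sum>j=1..n. (\<integral>x. D j x * X (Suc n) x \<partial>M)) = (\<Sum>j=1..n. (\<integral>x. D j x * Y j (Suc n) x \<partial>M))"
    by (rule sum.cong) (auto intro: integral_D_mult_X_eq)
  finally show ?thesis .
qed

text \<open>Since 2m S_{j-1}^{2m-1} = D_1 + ... + D_{j-1}, the first-order terms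
  sum_j 2m S_{j-1}^{2m-1} X_j regroup as sum_j D_j (X_{j+1} + ... + X_n), and D_j is
  G_j-measurable.\<close>

lemma moment_decomposition:
  "(\<integral>x. S n x ^ (2*m) \<partial>M) = (\<Sum>j=1..n. (\<integral>x. D j x * V n j x \<partial>M) + (\<integral>x. R j x \<partial>M))"
proof (induct n)
  case (Suc n)
  have V_Suc: "V (Suc n) j x = V n j x + Y j (Suc n) x" if "j \<in> {1..n}" for j x
  proof -
    have "{j<..Suc n} = insert (Suc n) {j<..n}" using that by auto
    then show ?thesis unfolding V_def by simp
  qed
  have "(\<integral>x. D j x * V (Suc n) j x \<partial>M) = (\<integral>x. D j x * V n j x \<partial>M) + (\<integral>x. D j x * Y j (Suc n) x \<partial>M)"
    if j: "j \<in> {1..n}" for j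
  proof -
    have "integrable M (\<lambda>x. D j x * V n j x)" "integrable M (\<lambda>x. D j x * Y j (Suc n) x)"
      using integral_D_mult_le(1) V_in_Lp Y_in_Lp j unfolding Y_def by auto
    then show ?thesis unfolding V_Suc[OF j] distrib_left by simp
  qed
  then have "(\<Sum>j=1..Suc n. (\<integral>x. D j x * V (Suc n) j x \<partial>M) + (\<integral>x. R j x \<partial>M))
      = (\<Sum>j=1..n. (\<integral>x. D j x * V n j x \<partial>M) + (\<integral>x. R j x \<partial>M))
        + (\<Sum>j=1..n. (\<integral>x. D j x * Y j (Suc n) x \<partial>M)) + (\<integral>x. R (Suc n) x \<partial>M)"
    by (simp add: V_def sum.distrib)
  then show ?case using Suc integral_S_Suc_power[of n] by simp
qed (use m in \<open>simp add: S_0\<close>)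

lemma moment_recursion:
  "(\<integral>x. S n x ^ (2*m) \<partial>M) \<le> real m * (2 * real m - 1) * A\<^sup>2 * (\<Sum>j=1..n. maxpow j)"
proof -
  have "(\<integral>x. D j x * V n j x \<partial>M) + (\<integral>x. R j x \<partial>M) \<le> real m * (2 * real m - 1) * A\<^sup>2 * maxpow j"
    if j: "j \<in> {1..n}" for j
  proof -
    define a where "a = Lp_norm M (2*m) (X j)"
    define b where "b = Lp_norm M (2*m) (V n j)"
    have "(\<integral>x. D j x * V n j x \<partial>M) \<le> real (2*m) * real (2*m-1) * a * b * maxpow j"
      unfolding a_def b_def using integral_D_mult_le(2)[of j "V n j"] V_in_Lp j by auto
    moreover have "(\<integral>x. R j x \<partial>M) \<le> real (2*m) * (real (2*m) - 1) / 2 * a ^ 2 * maxpow j"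
      unfolding a_def using integral_R_le(2)[of j] j by auto
    ultimately have "(\<integral>x. D j x * V n j x \<partial>M) + (\<integral>x. R j x \<partial>M)
        \<le> real m * (2 * real m - 1) * (a\<^sup>2 + 2 * a * b) * maxpow j"
      using m by (simp add: of_nat_diff algebra_simps)
    also have "\<dots> \<le> real m * (2 * real m - 1) * A\<^sup>2 * maxpow j"
      using Lp_norm_X_add_V_le[of j n] j m unfolding a_def b_def
      by (intro mult_right_mono mult_left_mono square_add_double_mult_le maxpow_nonneg)
        (auto simp: Lp_norm_nonneg)
    finally show ?thesis .
  qed
  then show ?thesis
    unfolding moment_decomposition sum_distrib_left by (rule sum_mono)
qed

lemma s_power: "s n ^ (2*m) = (\<integral>x. S n x ^ (2*m) \<partial>M)"
  unfolding s_def using Lp_norm_power[OF two_m_pos, of M "S n"] by (simp add: power_even_abs)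

lemma moment_bound: "(\<integral>x. S n x ^ (2*m) \<partial>M) \<le> (3 * real m * real n * A\<^sup>2) ^ m"
proof -
  have "s k \<le> real k * A" for k
  proof -
    have "s k \<le> (\<Sum>j=1..k. Lp_norm M (2*m) (X j))" unfolding s_def S_def[abs_def]
      by (rule minkowski_sum[OF one_le_two_m]) (auto intro: X_in_Lp)
    also have "\<dots> \<le> (\<Sum>j=1..k. A)"
    proof (rule sum_mono)
      fix j assume "j \<in> {1..k}"
      then show "Lp_norm M (2*m) (X j) \<le> A"
        using Lp_norm_X_add_V_le[of j k] Lp_norm_nonneg[of M "2*m" "V k j"] by simp
    qed
    finally show ?thesis by simp
  qed
  moreover have "s k ^ (2*m) \<le> real m * (2 * real m - 1) * A\<^sup>2 * (\<Sum>j=1..k. max (s j) (s (j-1)) ^ (2*m-2))" for k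
    using moment_recursion[of k] unfolding s_power maxpow_def .
  ultimately have "s n ^ 2 \<le> 3 * real m * real n * A\<^sup>2"
    using m by (intro moment_recursion_bound) (auto simp: s_def Lp_norm_nonneg)
  then have "(s n ^ 2) ^ m \<le> (3 * real m * real n * A\<^sup>2) ^ m" by (intro power_mono) auto
  then show ?thesis unfolding s_power[symmetric] by (simp add: power_mult)
qed

end

section \<open>Random vectors\<close>

lemma Lnorm_vcond_exp_component:
  fixes f :: "'a \<Rightarrow> real ^ 'd" and c :: 'd
  assumes finite: "Lnorm M (real (2*m)) (vcond_exp M F f) < \<infinity>" and m: "1 \<le> m"
  shows "in_Lp M (2*m) (real_cond_exp M F (\<lambda>y. f y $ c))"
    "Lp_norm M (2*m) (real_cond_exp M F (\<lambda>y. f y $ c)) \<le> enn2real (Lnorm M (real (2*m)) (vcond_exp M F f))"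
proof -
  let ?p = "2*m"
  define Y where "Y = real_cond_exp M F (\<lambda>y. f y $ c)"
  define I where "I = (\<integral>\<^sup>+ x. ennreal (norm (vcond_exp M F f x) powr real ?p) \<partial>M)"
  have I: "I \<noteq> \<infinity>" using finite unfolding Lnorm_def I_def Let_def by (auto split: if_splits)
  have [measurable]: "Y \<in> borel_measurable M" unfolding Y_def by simp
  have "Y x = vcond_exp M F f x $ c" for x by (simp add: Y_def vcond_exp_def)
  then have "\<bar>Y x\<bar> ^ ?p \<le> norm (vcond_exp M F f x) ^ ?p" for x
    by (simp add: power_mono component_le_norm_cart)
  also have "norm (vcond_exp M F f x) ^ ?p = norm (vcond_exp M F f x) powr real ?p" for x
    using m by (intro powr_realpow'[symmetric]) auto
  finally have J: "(\<integral>\<^sup>+ x. ennreal (\<bar>Y x\<bar> ^ ?p) \<partial>M) \<le> I"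
    unfolding I_def by (intro nn_integral_mono ennreal_leI)
  have integrable: "integrable M (\<lambda>x. \<bar>Y x\<bar> ^ ?p)"
    using J I by (intro integrableI_bounded) (auto simp: less_top[symmetric] top_unique)
  then show "in_Lp M ?p (real_cond_exp M F (\<lambda>y. f y $ c))" unfolding in_Lp_def Y_def by simp
  have "(\<integral>x. \<bar>Y x\<bar> ^ ?p \<partial>M) = enn2real (\<integral>\<^sup>+ x. ennreal (\<bar>Y x\<bar> ^ ?p) \<partial>M)"
    using integrable by (subst nn_integral_eq_integral) auto
  also have "\<dots> \<le> enn2real I" using J I by (intro enn2real_mono) (auto simp: less_top)
  finally have "(\<integral>x. \<bar>Y x\<bar> ^ ?p \<partial>M) powr (1 / real ?p) \<le> enn2real I powr (1 / real ?p)"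
    by (intro powr_mono2) auto
  then show "Lp_norm M ?p (real_cond_exp M F (\<lambda>y. f y $ c)) \<le> enn2real (Lnorm M (real ?p) (vcond_exp M F f))"
    using I unfolding Lp_norm_def Y_def[symmetric] Lnorm_def I_def[symmetric] Let_def by simp
qed

lemma sum_Lnorm_le_A_const:
  assumes "1 \<le> i"
  shows "(\<Sum>j=i..k. Lnorm M (real (2*m)) (vcond_exp M (G i) (\<eta> j))) \<le> A_const M G \<eta> m"
proof (cases "i \<le> k")
  case True
  define L where "L j = Lnorm M (real (2*m)) (vcond_exp M (G i) (\<eta> j))" for j
  have "(\<Sum>j=i..k. L j) = (\<Sum>j\<in>{0..k-i}. L (i+j))"
    using True by (intro sum.reindex_bij_witness[of _ "\<lambda>j. i+j" "\<lambda>j. j-i"]) auto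
  also have "\<dots> \<le> (\<Sum>j. L (i+j))" by (rule sum_le_suminf) auto
  also have "\<dots> \<le> A_const M G \<eta> m"
    unfolding A_const_def L_def using assms by (intro SUP_upper) auto
  finally show ?thesis unfolding L_def .
qed simp

lemma adapted_moments_component:
  fixes \<eta> :: "nat \<Rightarrow> 'a \<Rightarrow> real ^ 'd"
  assumes "prob_space M"
    and subalgebra: "\<And>i. 1 \<le> i \<Longrightarrow> subalgebra M (G i)"
    and "\<And>i j. 1 \<le> i \<Longrightarrow> i \<le> j \<Longrightarrow> sets (G i) \<subseteq> sets (G j)"
    and measurable: "\<And>j. 1 \<le> j \<Longrightarrow> \<eta> j \<in> borel_measurable (G j)"
    and integrable: "\<And>j. 1 \<le> j \<Longrightarrow> integrable M (\<eta> j)"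
    and m: "1 \<le> m" and finite: "A_const M G \<eta> m < \<infinity>"
  shows "adapted_moments M G (\<lambda>j x. \<eta> j x $ c) m (enn2real (A_const M G \<eta> m))"
proof -
  have Lnorm_finite: "Lnorm M (real (2*m)) (vcond_exp M (G i) (\<eta> j)) < \<infinity>" if "1 \<le> i" "i \<le> j" for i j
  proof -
    have "Lnorm M (real (2*m)) (vcond_exp M (G i) (\<eta> j))
        \<le> (\<Sum>j'=i..j. Lnorm M (real (2*m)) (vcond_exp M (G i) (\<eta> j')))"
      by (rule member_le_sum) (use that in auto)
    also have "\<dots> \<le> A_const M G \<eta> m" using that(1) by (rule sum_Lnorm_le_A_const)
    finally show ?thesis using finite by simp
  qed
  have measurable_c: "(\<lambda>x. \<eta> j x $ c) \<in> borel_measurable (G j)" if "1 \<le> j" for j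
  proof -
    have "(\<lambda>v::real ^ 'd. v $ c) \<in> borel_measurable borel"
      by (intro borel_measurable_continuous_onI continuous_on_component continuous_on_id)
    from measurable_compose[OF measurable[OF that] this] show ?thesis by simp
  qed
  have finite_M: "finite_measure M" using assms(1) by (simp add: prob_space_def)
  note component = Lnorm_vcond_exp_component[OF Lnorm_finite m, of _ _ c]
  show ?thesis
  proof (rule adapted_moments.intro)
    show "in_Lp M (2*m) (\<lambda>x. \<eta> j x $ c)" if j: "1 \<le> j" for j
    proof -
      have "AE x in M. real_cond_exp M (G j) (\<lambda>x. \<eta> j x $ c) x = \<eta> j x $ c"
        using integrable_bounded_linear[OF bounded_linear_vec_nth integrable[OF j]]
        by (intro sigma_finite_subalgebra.real_cond_exp_F_meas measurable_c j
            finite_measure_subalgebra_is_sigma_finite)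
          (auto simp: finite_measure_subalgebra_def finite_measure_subalgebra_axioms_def
            subalgebra[OF j] finite_M)
      then have "AE x in M. \<bar>real_cond_exp M (G j) (\<lambda>x. \<eta> j x $ c) x\<bar> ^ (2*m) = \<bar>\<eta> j x $ c\<bar> ^ (2*m)"
        by eventually_elim simp
      moreover have [measurable]: "(\<lambda>x. \<eta> j x $ c) \<in> borel_measurable M"
        using measurable_from_subalg[OF subalgebra[OF j] measurable_c[OF j]] .
      ultimately have "integrable M (\<lambda>x. \<bar>real_cond_exp M (G j) (\<lambda>x. \<eta> j x $ c) x\<bar> ^ (2*m))
          = integrable M (\<lambda>x. \<bar>\<eta> j x $ c\<bar> ^ (2*m))"
        by (intro integrable_cong_AE) measurable
      then show ?thesis using component(1)[OF j order_refl] unfolding in_Lp_def by simp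
    qed
    show "(\<Sum>j=i..k. Lp_norm M (2*m) (real_cond_exp M (G i) (\<lambda>x. \<eta> j x $ c)))
        \<le> enn2real (A_const M G \<eta> m)" if i: "1 \<le> i" for i k
    proof -
      have "(\<Sum>j=i..k. Lp_norm M (2*m) (real_cond_exp M (G i) (\<lambda>x. \<eta> j x $ c)))
          \<le> (\<Sum>j=i..k. enn2real (Lnorm M (real (2*m)) (vcond_exp M (G i) (\<eta> j))))"
        using component(2) i by (intro sum_mono) auto
      also have "\<dots> = enn2real (\<Sum>j=i..k. Lnorm M (real (2*m)) (vcond_exp M (G i) (\<eta> j)))"
        using Lnorm_finite i by (subst enn2real_sum) auto
      also have "\<dots> \<le> enn2real (A_const M G \<eta> m)"
        using sum_Lnorm_le_A_const[OF i] finite by (intro enn2real_mono) auto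
      finally show ?thesis .
    qed
    show "prob_space M" by fact
    show "1 \<le> m" by (rule m)
    show "subalgebra M (G i)" if "1 \<le> i" for i using subalgebra that .
    show "sets (G i) \<subseteq> sets (G j)" if "1 \<le> i" "i \<le> j" for i j using assms(3) that .
    show "(\<lambda>x. \<eta> j x $ c) \<in> borel_measurable (G j)" if "1 \<le> j" for j using measurable_c that .
    show "in_Lp M (2*m) (real_cond_exp M (G i) (\<lambda>x. \<eta> j x $ c))" if "1 \<le> i" "i \<le> j" for i j
      using component(1) that .
  qed
qed

lemma nn_integral_norm_power_le:
  fixes F :: "'a \<Rightarrow> real ^ 'd"
  assumes m: "1 \<le> m" and integrable: "\<And>c. integrable M (\<lambda>x. (F x $ c) ^ (2*m))"
    and bound: "\<And>c. (\<integral>x. (F x $ c) ^ (2*m) \<partial>M) \<le> K"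
  shows "(\<integral>\<^sup>+ x. ennreal (norm (F x) ^ (2*m)) \<partial>M) \<le> ennreal (real CARD('d) ^ m * K)"
proof -
  let ?d = "real CARD('d)"
  let ?g = "\<lambda>x. ?d ^ (m-1) * (\<Sum>c\<in>UNIV. (F x $ c) ^ (2*m))"
  have "(\<integral>\<^sup>+ x. ennreal (norm (F x) ^ (2*m)) \<partial>M) \<le> (\<integral>\<^sup>+ x. ennreal (?g x) \<partial>M)"
    using norm_power_le_sum_component_power[OF m] by (intro nn_integral_mono ennreal_leI)
  also have "\<dots> = ennreal (\<integral>x. ?g x \<partial>M)"
    using integrable by (intro nn_integral_eq_integral AE_I2)
      (auto intro!: mult_nonneg_nonneg sum_nonneg simp: zero_le_even_power)
  also have "(\<integral>x. ?g x \<partial>M) = ?d ^ (m-1) * (\<Sum>c\<in>UNIV. (\<integral>x. (F x $ c) ^ (2*m) \<partial>M))"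
    using integrable by simp
  also have "\<dots> \<le> ?d ^ (m-1) * (\<Sum>c\<in>(UNIV::'d set). K)"
    using bound by (intro mult_left_mono sum_mono) auto
  also have "\<dots> = ?d ^ m * K"
    using m by (cases m) auto
  finally show ?thesis by (simp add: ennreal_leI)
qed

theorem lemma3p4:
  fixes M :: "'a measure" and G :: "nat \<Rightarrow> 'a measure"
    and \<eta> :: "nat \<Rightarrow> 'a \<Rightarrow> real ^ 'd" and m n :: nat
  assumes "prob_space M"
    and "\<And>i. 1 \<le> i \<Longrightarrow> subalgebra M (G i)"
    and "\<And>i j. 1 \<le> i \<Longrightarrow> i \<le> j \<Longrightarrow> sets (G i) \<subseteq> sets (G j)"
    and "\<And>j. 1 \<le> j \<Longrightarrow> \<eta> j \<in> borel_measurable (G j)"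
    and "\<And>j. 1 \<le> j \<Longrightarrow> integrable M (\<eta> j)"
    and "1 \<le> m"
    and "A_const M G \<eta> m < \<infinity>"
    and "1 \<le> n"
  shows "(\<integral>\<^sup>+ x. ennreal (norm (\<Sum>j=1..n. \<eta> j x) ^ (2 * m)) \<partial>M)
           \<le> ennreal (3 * fact (2 * m) * real CARD('d) ^ m * real n ^ m) * A_const M G \<eta> m ^ (2 * m)"
proof -
  define A where "A = enn2real (A_const M G \<eta> m)"
  have A: "A_const M G \<eta> m = ennreal A" "0 \<le> A" using assms(7) unfolding A_def by auto
  have "integrable M (\<lambda>x. ((\<Sum>j=1..n. \<eta> j x) $ c) ^ (2*m)) \<and>
      (\<integral>x. ((\<Sum>j=1..n. \<eta> j x) $ c) ^ (2*m) \<partial>M) \<le> (3 * real m * real n * A\<^sup>2) ^ m" for c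
  proof -
    interpret adapted_moments M G "\<lambda>j x. \<eta> j x $ c" m A
      unfolding A_def using assms(1-7) by (rule adapted_moments_component)
    show ?thesis using S_in_Lp[of n] moment_bound[of n]
      unfolding in_Lp_def S_def sum_component by (simp add: power_even_abs)
  qed
  then have "(\<integral>\<^sup>+ x. ennreal (norm (\<Sum>j=1..n. \<eta> j x) ^ (2 * m)) \<partial>M)
      \<le> ennreal (real CARD('d) ^ m * (3 * real m * real n * A\<^sup>2) ^ m)"
    using assms(6) by (intro nn_integral_norm_power_le) auto
  also have "real CARD('d) ^ m * (3 * real m * real n * A\<^sup>2) ^ m
      = (3 * real m) ^ m * (real CARD('d) ^ m * real n ^ m * A ^ (2 * m))"
    unfolding power_mult[of A 2 m] by (simp add: power_mult_distrib mult_ac)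
  also have "\<dots> \<le> 3 * fact (2 * m) * (real CARD('d) ^ m * real n ^ m * A ^ (2 * m))"
    using three_mult_power_le_fact[OF assms(6)] A(2) by (intro mult_right_mono) auto
  also have "ennreal \<dots> = ennreal (3 * fact (2 * m) * real CARD('d) ^ m * real n ^ m) * ennreal A ^ (2 * m)"
    using A(2) by (simp add: ennreal_mult ennreal_power mult_ac)
  finally show ?thesis unfolding A(1) by (simp add: ennreal_leI)
qed

end
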